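(* Let $k \ge 0$, let $G_i$ and $G_j$ be two node-labeled graphs with node coloring $l$, and let $F^{(k)}$ be a function assigning to each node $v \in V(G_i) \cup V(G_j)$ a vector $F^{(k)}(v) \in \mathbb{R}^{d}$ such that for all nodes $u, v \in V(G_i) \cup V(G_j)$, $c_l^{(k)}(u)=c_l^{(k)}(v) \Longleftrightarrow F^{(k)}(u) = F^{(k)}(v)$. Let $f_G$ be a function mapping countable multisets of elements of $\mathbb{R}^d$ to $\mathbb{R}^{d_G}$, and define $F^{(k)}_G(G) = f_G(\{\!\{F^{(k)}(v) \mid v \in V(G)\}\!\})$. Put $\mathcal{A}=\{\!\{F^{(k)}(v) \mid v \in V(G_i)\}\!\}$ and $\mathcal{B}=\{\!\{F^{(k)}(v) \mid v \in V(G_j)\}\!\}$. If $$f_G(\mathcal{A}) = f_G(\mathcal{B}) \Longrightarrow \mathcal{A} = \mathcal{B},$$ then $$F^{(k)}_G(G_i)=F^{(k)}_G(G_j) \Longleftrightarrow C_l^{(k)}(G_i) = C_l^{(k)}(G_j).$$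
   Context: A graph $G=(V,E)$ has a finite node set $V$ and edges $E \subseteq \{\{u,v\} \subseteq V\}$; the neighborhood of $v$ is $N(v)=\{u \in V \mid \{v,u\} \in E\}$. A node coloring (labeling) is a function $l$ from nodes to a set of colors. Multisets are written $\{\!\{\dots\}\!\}$. 1-WL coloring: set $c_l^{(0)} = l$ and for $t>0$, $c_l^{(t)}(v) = \mathrm{HASH}\big(c_l^{(t-1)}(v), \{\!\{c_l^{(t-1)}(u) \mid u \in N(v)\}\!\}\big)$, where $\mathrm{HASH}$ is an injective map sending each such pair to a value not used in earlier iterations (the same map is used for all graphs considered). For a graph $G$, $C_l^{(t)}(G) = \{\!\{c_l^{(t)}(v) \mid v \in V(G)\}\!\}$. *)

theory Defs
  imports "HOL-Analysis.Analysis" "HOL-Library.Multiset"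
begin

type_synonym 'v graph = "'v set \<times> 'v set set"

definition is_graph :: "'v graph \<Rightarrow> bool" where
  "is_graph G \<longleftrightarrow> finite (fst G) \<and> snd G \<subseteq> {{u, v} | u v. u \<in> fst G \<and> v \<in> fst G}"

definition nbhd :: "'v graph \<Rightarrow> 'v \<Rightarrow> 'v set" where
  "nbhd G v = {u \<in> fst G. {v, u} \<in> snd G}"

text \<open>The HASH function is realised by the
  injective constructor WL_Step; a colour produced in iteration t has nesting
  depth t, hence is never a value used in an earlier iteration.  The same map
  is used for all graphs.\<close>
datatype 'c wl_color = WL_Base 'c | WL_Step "'c wl_color" "'c wl_color multiset"

fun wl :: "'v graph \<Rightarrow> ('v \<Rightarrow> 'c) \<Rightarrow> nat \<Rightarrow> 'v \<Rightarrow> 'c wl_color" where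
  "wl G l 0 v = WL_Base (l v)"
| "wl G l (Suc t) v = WL_Step (wl G l t v) (image_mset (wl G l t) (mset_set (nbhd G v)))"

definition wl_multiset :: "'v graph \<Rightarrow> ('v \<Rightarrow> 'c) \<Rightarrow> nat \<Rightarrow> 'c wl_color multiset" where
  "wl_multiset G l t = image_mset (wl G l t) (mset_set (fst G))"

fun wl_union :: "'v graph \<Rightarrow> 'v graph \<Rightarrow> ('v + 'v \<Rightarrow> 'c) \<Rightarrow> nat \<Rightarrow> 'v + 'v \<Rightarrow> 'c wl_color" where
  "wl_union Gi Gj l t (Inl v) = wl Gi (l \<circ> Inl) t v"
| "wl_union Gi Gj l t (Inr v) = wl Gj (l \<circ> Inr) t v"

end

theory Submission
  imports Defs
begin

text \<open>On the nodes of both graphs the WL colour and F induce the same partition, so each is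
  a function of the other there; hence the two node multisets are equal for exactly the same
  pairs of graphs, and the assumed injectivity of f_G on A, B transfers this to the readout.\<close>

lemma image_mset_eq_if_factors:
  assumes factors: "\<forall>u \<in> S. \<forall>v \<in> S. c u = c v \<longrightarrow> F u = F v"
    and "set_mset M \<subseteq> S" and "set_mset N \<subseteq> S"
    and "image_mset c M = image_mset c N"
  shows "image_mset F M = image_mset F N"
proof -
  define g where "g x = F (SOME u. u \<in> S \<and> c u = x)" for x
  have g_c: "g (c u) = F u" if "u \<in> S" for u
  proof -
    have "(SOME w. w \<in> S \<and> c w = c u) \<in> S \<and> c (SOME w. w \<in> S \<and> c w = c u) = c u"
      using that by (metis (mono_tags, lifting) someI)
    then show ?thesis
      unfolding g_def using factors that by blast
  qed
  have "image_mset F K = image_mset g (image_mset c K)" if "set_mset K \<subseteq> S" for K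
    unfolding multiset.map_comp using that g_c by (intro image_mset_cong) auto
  then show ?thesis
    using assms(2-4) by metis
qed

lemma image_mset_eq_iff_same_kernel:
  assumes "\<forall>u \<in> S. \<forall>v \<in> S. c u = c v \<longleftrightarrow> F u = F v"
    and "set_mset M \<subseteq> S" and "set_mset N \<subseteq> S"
  shows "image_mset F M = image_mset F N \<longleftrightarrow> image_mset c M = image_mset c N"
  using assms image_mset_eq_if_factors[of S c F M N] image_mset_eq_if_factors[of S F c M N]
  by blast

lemma wl_multiset_Inl:
  "wl_multiset Gi (l \<circ> Inl) t = image_mset (wl_union Gi Gj l t) (image_mset Inl (mset_set (fst Gi)))"
  by (simp add: wl_multiset_def multiset.map_comp comp_def)

lemma wl_multiset_Inr:
  "wl_multiset Gj (l \<circ> Inr) t = image_mset (wl_union Gi Gj l t) (image_mset Inr (mset_set (fst Gj)))"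
  by (simp add: wl_multiset_def multiset.map_comp comp_def)

lemma set_mset_image_mset_mset_set_subset: "set_mset (image_mset f (mset_set A)) \<subseteq> f ` A"
  by (cases "finite A") auto

theorem proposition3p5:
  fixes Gi Gj :: "'v graph"
    and l :: "'v + 'v \<Rightarrow> 'c"
    and k :: nat
    and F :: "'v + 'v \<Rightarrow> real ^ 'd"
    and fG :: "(real ^ 'd) multiset \<Rightarrow> real ^ 'e"
  assumes "is_graph Gi" and "is_graph Gj"
    and "\<forall>u \<in> Inl ` fst Gi \<union> Inr ` fst Gj. \<forall>v \<in> Inl ` fst Gi \<union> Inr ` fst Gj.
           wl_union Gi Gj l k u = wl_union Gi Gj l k v \<longleftrightarrow> F u = F v"
    and "fG {# F (Inl v). v \<in># mset_set (fst Gi) #} = fG {# F (Inr v). v \<in># mset_set (fst Gj) #}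
         \<Longrightarrow> {# F (Inl v). v \<in># mset_set (fst Gi) #} = {# F (Inr v). v \<in># mset_set (fst Gj) #}"
  shows "fG {# F (Inl v). v \<in># mset_set (fst Gi) #} = fG {# F (Inr v). v \<in># mset_set (fst Gj) #}
         \<longleftrightarrow> wl_multiset Gi (l \<circ> Inl) k = wl_multiset Gj (l \<circ> Inr) k"
proof -
  define M :: "('v + 'v) multiset" where "M = image_mset Inl (mset_set (fst Gi))"
  define N :: "('v + 'v) multiset" where "N = image_mset Inr (mset_set (fst Gj))"
  have "set_mset M \<subseteq> Inl ` fst Gi" "set_mset N \<subseteq> Inr ` fst Gj"
    unfolding M_def N_def by (rule set_mset_image_mset_mset_set_subset)+
  then have "image_mset F M = image_mset F N \<longleftrightarrow>
      image_mset (wl_union Gi Gj l k) M = image_mset (wl_union Gi Gj l k) N"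
    by (intro image_mset_eq_iff_same_kernel[OF assms(3)]) auto
  also have "\<dots> \<longleftrightarrow> wl_multiset Gi (l \<circ> Inl) k = wl_multiset Gj (l \<circ> Inr) k"
    unfolding M_def N_def wl_multiset_Inl[of _ _ _ Gj] wl_multiset_Inr[of _ _ _ Gi] ..
  finally have "image_mset F M = image_mset F N \<longleftrightarrow>
      wl_multiset Gi (l \<circ> Inl) k = wl_multiset Gj (l \<circ> Inr) k" .
  moreover have "image_mset F M = {# F (Inl v). v \<in># mset_set (fst Gi) #}"
    "image_mset F N = {# F (Inr v). v \<in># mset_set (fst Gj) #}"
    unfolding M_def N_def by (simp_all add: multiset.map_comp comp_def)
  ultimately show ?thesis
    using assms(4) by metis
qed

end
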